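(* Consider a solution $(s(t),x(t),o(t))$, $t\ge0$, of the networked SIR epidemic-opinion model described in the context, under the standing assumption stated there. For all $t\ge0$, $$R_{\min}(t)\le R_o(t)\le R_{\max}(t),$$ where $R_o(t)=\rho\big(G(o(t))^{-1}\tilde S(t)B(o(t))\big)$, $R_{\min}(t)=\rho\big(G(\mathbf 1_n)^{-1}\tilde S(t)B(\mathbf 1_n)\big)$ and $R_{\max}(t)=\rho\big(G(\mathbf 0)^{-1}\tilde S(t)B(\mathbf 0)\big)$.
   Context: There are $n$ communities. For $t\ge0$ and $i\in[n]$, $s_i(t),x_i(t),o_i(t)\in[0,1]$ denote the susceptible proportion, infected proportion and opinion of community $i$. The disease transmission network is a directed graph $\mathcal G=(\mathcal V,\mathcal E)$ on $n$ nodes with edge weights $\beta_{ij}>0$ if $(v_j,v_i)\in\mathcal E$ (and $\beta_{ij}=0$ otherwise); $\mathcal N_i=\{v_j:(v_j,v_i)\in\mathcal E\}$. The opinion network is a directed graph $\bar{\mathcal G}$ on the same nodes with nonnegative weights $\bar a_{ij}$ and Laplacian $\bar L=\mathrm{diag}(k_1,\dots,k_n)-\bar A$, $[\bar A]_{ij}=\bar a_{ij}$, $k_i=\sum_j\bar a_{ij}$. For $o\in[0,1]^n$ define the matrix $B(o)$ by $[B(o)]_{ij}=\beta_{ij}-(\beta_{ij}-\beta_{\min})o_i$ for $j\in\mathcal N_i$ and $0$ otherwise, and the diagonal matrix $G(o)$ with $[G(o)]_{ii}=\gamma_{\min}+(\gamma_i-\gamma_{\min})o_i$. Let $\tilde S(t)=\mathrm{diag}(s(t))$.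 The model is $\dot s=-\tilde S B(o)x$, $\dot x=\tilde S B(o)x-G(o)x$, $\dot o=(\mathbf 1_n-s)-(\bar L+I_n)o$. Standing assumption: for all $i$, $s_i(0),x_i(0),o_i(0)\in[0,1]$ with $s_i(0)+x_i(0)\le1$, $\gamma_i\ge\gamma_{\min}>0$, $\beta_{ij}\ge\beta_{\min}>0$ for all $j\in\mathcal N_i$, and $\mathcal G$, $\bar{\mathcal G}$ strongly connected. $\rho(\cdot)$ denotes spectral radius. *)

theory Defs
  imports "Jordan_Normal_Form.Spectral_Radius"
begin

text \<open>Nodes are 0..n-1. An edge (v_j, v_i) of a weighted digraph with weight
  function w (w i j = weight of the edge from v_j to v_i) exists iff w i j > 0.\<close>

definition edges :: "nat \<Rightarrow> (nat \<Rightarrow> nat \<Rightarrow> real) \<Rightarrow> (nat \<times> nat) set" where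
  "edges n w = {(j, i). j < n \<and> i < n \<and> w i j > 0}"

definition strongly_connected :: "nat \<Rightarrow> (nat \<Rightarrow> nat \<Rightarrow> real) \<Rightarrow> bool" where
  "strongly_connected n w \<longleftrightarrow> (\<forall>i<n. \<forall>j<n. (i, j) \<in> (edges n w)\<^sup>*)"

definition Bmat :: "nat \<Rightarrow> (nat \<Rightarrow> nat \<Rightarrow> real) \<Rightarrow> real \<Rightarrow> (nat \<Rightarrow> real) \<Rightarrow> real mat" where
  "Bmat n \<beta> \<beta>min opn = mat n n (\<lambda>(i, j). if \<beta> i j > 0 then \<beta> i j - (\<beta> i j - \<beta>min) * opn i else 0)"

definition Gmat :: "nat \<Rightarrow> (nat \<Rightarrow> real) \<Rightarrow> real \<Rightarrow> (nat \<Rightarrow> real) \<Rightarrow> real mat" where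
  "Gmat n \<gamma> \<gamma>min opn = mat_diag n (\<lambda>i. \<gamma>min + (\<gamma> i - \<gamma>min) * opn i)"

definition Ginv :: "nat \<Rightarrow> (nat \<Rightarrow> real) \<Rightarrow> real \<Rightarrow> (nat \<Rightarrow> real) \<Rightarrow> real mat" where
  "Ginv n \<gamma> \<gamma>min opn = mat_diag n (\<lambda>i. 1 / (\<gamma>min + (\<gamma> i - \<gamma>min) * opn i))"

definition rho :: "real mat \<Rightarrow> real" where
  "rho A = spectral_radius (map_mat complex_of_real A)"

definition Rrep :: "nat \<Rightarrow> (nat \<Rightarrow> nat \<Rightarrow> real) \<Rightarrow> real \<Rightarrow> (nat \<Rightarrow> real) \<Rightarrow> real
    \<Rightarrow> (nat \<Rightarrow> real) \<Rightarrow> (nat \<Rightarrow> real) \<Rightarrow> real" where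
  "Rrep n \<beta> \<beta>min \<gamma> \<gamma>min s opn = rho (Ginv n \<gamma> \<gamma>min opn * mat_diag n s * Bmat n \<beta> \<beta>min opn)"

end

theory Submission
  imports Defs "HOL-Analysis.Elementary_Metric_Spaces"
begin

(* The box 0 \<le> s \<le> 1, x \<ge> 0, 0 \<le> o \<le> 1 is forward invariant.  Each of these bounds reads
   y \<ge> 0 for a vector quantity y whose i-th derivative is at least F_i y_i whenever y_i < 0 is a
   smallest coordinate, with F continuous; comparing y with -e exp(L t) for L above the bound of F
   shows that no coordinate can become negative.  For opinions in [0,1] every entry
   s_i (beta_ij - (beta_ij - beta_min) o_i) / (gamma_min + (gamma_i - gamma_min) o_i)
   of G(o)^-1 S B(o) is nonnegative and antitone in o_i, so it remains to show that the spectral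
   radius is monotone on entrywise nonnegative matrices.  If A v = lambda v with 0 \<le> A \<le> B, then
   |lambda| |v| \<le> A |v| \<le> B |v|, and a nonnegative u \<noteq> 0 with mu u \<le> B u forces mu \<le> rho B:
   otherwise, for rho B < r < mu, the powers of B/r would be bounded (rho (B/r) < 1) and grow
   like (mu/r)^k at the same time. *)

lemma index_mult_mat_vec_sum:
  assumes "A \<in> carrier_mat m n" "v \<in> carrier_vec n" "i < m"
  shows "(A *\<^sub>v v) $ i = (\<Sum>j<n. A $$ (i, j) * v $ j)"
  using assms by (auto simp: scalar_prod_def lessThan_atLeast0 intro!: sum.cong)

lemma pow_mat_Suc_left:
  assumes "A \<in> carrier_mat n n"
  shows "A ^\<^sub>m Suc k = A * A ^\<^sub>m k"
proof (induction k)
  case 0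
  with assms show ?case by simp
next
  case (Suc k)
  have "A ^\<^sub>m Suc (Suc k) = (A * A ^\<^sub>m k) * A" using Suc by simp
  also have "\<dots> = A * (A ^\<^sub>m k * A)" using assms by (intro assoc_mult_mat) auto
  finally show ?case by simp
qed

lemma rho_nonneg:
  assumes "A \<in> carrier_mat n n" "0 < n"
  shows "0 \<le> rho A"
  using spectral_radius_mem_max(1)[of "map_mat complex_of_real A" n] assms
  unfolding rho_def by auto

lemma spectral_radius_smult_le:
  fixes A :: "complex mat"
  assumes A: "A \<in> carrier_mat n n" and n: "0 < n" and c: "c \<noteq> 0"
  shows "spectral_radius (c \<cdot>\<^sub>m A) \<le> norm c * spectral_radius A"
proof -
  have cA: "c \<cdot>\<^sub>m A \<in> carrier_mat n n" using A by simp
  obtain ev where ev: "ev \<in> spectrum (c \<cdot>\<^sub>m A)" "spectral_radius (c \<cdot>\<^sub>m A) = norm ev"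
    using spectral_radius_mem_max(1)[OF cA n] by auto
  then obtain v where v: "v \<in> carrier_vec n" "v \<noteq> 0\<^sub>v n" "(c \<cdot>\<^sub>m A) *\<^sub>v v = ev \<cdot>\<^sub>v v"
    unfolding spectrum_def eigenvalue_def eigenvector_def using cA by auto
  have "A *\<^sub>v v = (ev / c) \<cdot>\<^sub>v v"
  proof (rule eq_vecI)
    fix i assume "i < dim_vec ((ev / c) \<cdot>\<^sub>v v)"
    then have i: "i < n" using v by simp
    have "c * (A *\<^sub>v v) $ i = ((c \<cdot>\<^sub>m A) *\<^sub>v v) $ i"
      unfolding index_mult_mat_vec_sum[OF A v(1) i] index_mult_mat_vec_sum[OF cA v(1) i]
      using A i by (auto simp: sum_distrib_left mult.assoc intro!: sum.cong)
    also have "\<dots> = ev * v $ i" using v i by simp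
    finally show "(A *\<^sub>v v) $ i = ((ev / c) \<cdot>\<^sub>v v) $ i"
      using c i v(1) by (simp add: field_simps)
  qed (use A v in auto)
  then have "ev / c \<in> spectrum A"
    unfolding spectrum_def eigenvalue_def eigenvector_def using A v by auto
  then have "norm (ev / c) \<le> spectral_radius A"
    by (intro spectral_radius_mem_max(2)[OF A n] imageI)
  then have "norm ev / norm c \<le> spectral_radius A" by (simp add: norm_divide)
  then show ?thesis using ev c by (simp add: divide_le_eq mult.commute)
qed

lemma rho_smult_le:
  assumes "B \<in> carrier_mat n n" "0 < n" "c \<noteq> 0"
  shows "rho (c \<cdot>\<^sub>m B) \<le> \<bar>c\<bar> * rho B"
proof -
  have "map_mat complex_of_real (c \<cdot>\<^sub>m B) = complex_of_real c \<cdot>\<^sub>m map_mat complex_of_real B"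
    by (rule eq_matI) auto
  then show ?thesis
    using spectral_radius_smult_le[of "map_mat complex_of_real B" n "complex_of_real c"] assms
    unfolding rho_def by simp
qed

lemma bounded_pow_mat_if_rho_less_1:
  assumes C: "C \<in> carrier_mat n n" and "rho C < 1"
  obtains b where "\<And>k i j. i < n \<Longrightarrow> j < n \<Longrightarrow> \<bar>(C ^\<^sub>m k) $$ (i, j)\<bar> \<le> b"
proof -
  let ?Cc = "map_mat complex_of_real C"
  obtain b where b: "\<And>k. norm_bound (?Cc ^\<^sub>m k) b"
    using spectral_radius_jnf_norm_bound_less_1_upper_triangular[of ?Cc n] C assms(2)
    unfolding rho_def by auto
  have "\<bar>(C ^\<^sub>m k) $$ (i, j)\<bar> \<le> b" if "i < n" "j < n" for k i j
  proof -
    have "norm ((?Cc ^\<^sub>m k) $$ (i, j)) \<le> b"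
      using b[of k] that C unfolding norm_bound_def by simp
    then show ?thesis
      using that C by (simp flip: of_real_hom.mat_hom_pow[OF C])
  qed
  then show thesis using that by blast
qed

lemma pow_mat_mult_vec_ge:
  fixes C :: "real mat"
  assumes C: "C \<in> carrier_mat n n" and C_nonneg: "\<forall>i<n. \<forall>j<n. 0 \<le> C $$ (i, j)"
    and u: "u \<in> carrier_vec n" and q: "0 \<le> q" and Cu: "\<forall>i<n. q * u $ i \<le> (C *\<^sub>v u) $ i"
  shows "\<forall>i<n. q ^ k * u $ i \<le> (C ^\<^sub>m k *\<^sub>v u) $ i"
proof (induction k)
  case 0
  show ?case using u C by simp
next
  case (Suc k)
  show ?case
  proof (intro allI impI)
    fix i assume i: "i < n"
    have Cku: "C ^\<^sub>m k *\<^sub>v u \<in> carrier_vec n"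
      using C u by (metis mult_mat_vec_carrier pow_carrier_mat)
    have "q ^ Suc k * u $ i = q ^ k * (q * u $ i)" by simp
    also have "\<dots> \<le> q ^ k * (C *\<^sub>v u) $ i"
      using Cu i q by (intro mult_left_mono) auto
    also have "\<dots> = (\<Sum>j<n. C $$ (i, j) * (q ^ k * u $ j))"
      by (simp add: index_mult_mat_vec_sum[OF C u i] sum_distrib_left algebra_simps)
    also have "\<dots> \<le> (\<Sum>j<n. C $$ (i, j) * (C ^\<^sub>m k *\<^sub>v u) $ j)"
      using Suc C_nonneg i by (intro sum_mono mult_left_mono) auto
    also have "\<dots> = (C *\<^sub>v (C ^\<^sub>m k *\<^sub>v u)) $ i"
      by (rule index_mult_mat_vec_sum[OF C Cku i, symmetric])
    also have "C *\<^sub>v (C ^\<^sub>m k *\<^sub>v u) = C ^\<^sub>m Suc k *\<^sub>v u"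
      unfolding pow_mat_Suc_left[OF C] using C u by (intro assoc_mult_mat_vec[symmetric]) auto
    finally show "q ^ Suc k * u $ i \<le> (C ^\<^sub>m Suc k *\<^sub>v u) $ i" .
  qed
qed

lemma rho_ge_1_if_expanding:
  assumes C: "C \<in> carrier_mat n n" and C_nonneg: "\<forall>i<n. \<forall>j<n. 0 \<le> C $$ (i, j)"
    and u: "u \<in> carrier_vec n" and u_nonneg: "\<forall>i<n. 0 \<le> u $ i" and i0: "i0 < n" "0 < u $ i0"
    and q: "1 < q" and Cu: "\<forall>i<n. q * u $ i \<le> (C *\<^sub>v u) $ i"
  shows "1 \<le> rho C"
proof (rule ccontr)
  assume "\<not> 1 \<le> rho C"
  then obtain b where b: "\<And>k i j. i < n \<Longrightarrow> j < n \<Longrightarrow> \<bar>(C ^\<^sub>m k) $$ (i, j)\<bar> \<le> b"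
    using bounded_pow_mat_if_rho_less_1[OF C] by auto
  define M where "M = b * (\<Sum>j<n. u $ j)"
  obtain k where "M / u $ i0 < q ^ k" using real_arch_pow[OF q] by blast
  then have "M < q ^ k * u $ i0" using i0 by (simp add: divide_less_eq)
  also have "\<dots> \<le> (C ^\<^sub>m k *\<^sub>v u) $ i0"
    using pow_mat_mult_vec_ge[OF C C_nonneg u _ Cu] q i0 by auto
  also have "\<dots> = (\<Sum>j<n. (C ^\<^sub>m k) $$ (i0, j) * u $ j)"
    using index_mult_mat_vec_sum[OF pow_carrier_mat[OF C] u i0(1)] .
  also have "\<dots> \<le> M"
    unfolding M_def sum_distrib_left using b[of i0 _ k] i0 u_nonneg
    by (intro sum_mono mult_right_mono) (auto simp: abs_le_iff)
  finally show False by simp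
qed

lemma Collatz_Wielandt_lower_bound:
  assumes B: "B \<in> carrier_mat n n" and B_nonneg: "\<forall>i<n. \<forall>j<n. 0 \<le> B $$ (i, j)"
    and u: "u \<in> carrier_vec n" and u_nonneg: "\<forall>i<n. 0 \<le> u $ i" and i0: "i0 < n" "0 < u $ i0"
    and mu: "0 < \<mu>" and Bu: "\<forall>i<n. \<mu> * u $ i \<le> (B *\<^sub>v u) $ i"
  shows "\<mu> \<le> rho B"
proof (rule ccontr)
  assume "\<not> \<mu> \<le> rho B"
  then obtain r where r: "rho B < r" "r < \<mu>" using dense[of "rho B" \<mu>] by force
  have r_pos: "0 < r" using r rho_nonneg[OF B] i0 by force
  define C where "C = (1 / r) \<cdot>\<^sub>m B"
  have C: "C \<in> carrier_mat n n" using B unfolding C_def by simp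
  have "1 \<le> rho C"
  proof (rule rho_ge_1_if_expanding[OF C _ u u_nonneg i0, of "\<mu> / r"])
    show "\<forall>i<n. \<forall>j<n. 0 \<le> C $$ (i, j)" using B B_nonneg r_pos unfolding C_def by auto
    show "1 < \<mu> / r" using r r_pos by simp
    show "\<forall>i<n. \<mu> / r * u $ i \<le> (C *\<^sub>v u) $ i"
    proof (intro allI impI)
      fix i assume i: "i < n"
      have "(C *\<^sub>v u) $ i = (B *\<^sub>v u) $ i / r"
        unfolding index_mult_mat_vec_sum[OF C u i] index_mult_mat_vec_sum[OF B u i]
          sum_divide_distrib
        using B i by (intro sum.cong) (auto simp: C_def)
      then show "\<mu> / r * u $ i \<le> (C *\<^sub>v u) $ i"
        using Bu i r_pos by (simp add: divide_right_mono)
    qed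
  qed
  also have "rho C \<le> rho B / r"
    using rho_smult_le[OF B _, of "1 / r"] i0 r_pos unfolding C_def by simp
  also have "\<dots> < 1" using r r_pos by simp
  finally show False by simp
qed

lemma rho_mono:
  assumes A: "A \<in> carrier_mat n n" and B: "B \<in> carrier_mat n n" and n: "0 < n"
    and A_nonneg: "\<forall>i<n. \<forall>j<n. 0 \<le> A $$ (i, j)"
    and A_le_B: "\<forall>i<n. \<forall>j<n. A $$ (i, j) \<le> B $$ (i, j)"
  shows "rho A \<le> rho B"
proof -
  let ?Ac = "map_mat complex_of_real A"
  have Ac: "?Ac \<in> carrier_mat n n" using A by simp
  obtain ev where ev: "ev \<in> spectrum ?Ac" "rho A = norm ev"
    using spectral_radius_mem_max(1)[OF Ac n] unfolding rho_def by auto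
  show ?thesis
  proof (cases "ev = 0")
    case True
    then show ?thesis using ev rho_nonneg[OF B n] by simp
  next
    case False
    obtain v where v: "v \<in> carrier_vec n" "v \<noteq> 0\<^sub>v n" "?Ac *\<^sub>v v = ev \<cdot>\<^sub>v v"
      using ev(1) Ac unfolding spectrum_def eigenvalue_def eigenvector_def by auto
    obtain i0 where i0: "i0 < n" "v $ i0 \<noteq> 0"
      using v(1,2) by (metis eq_vecI carrier_vecD index_zero_vec(1) index_zero_vec(2))
    define u where "u = vec n (\<lambda>i. norm (v $ i))"
    have u: "u \<in> carrier_vec n" unfolding u_def by simp
    have "norm ev * u $ i \<le> (B *\<^sub>v u) $ i" if i: "i < n" for i
    proof -
      have "norm ev * u $ i = norm (\<Sum>j<n. ?Ac $$ (i, j) * v $ j)"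
        using v i by (simp add: u_def norm_mult flip: index_mult_mat_vec_sum[OF Ac v(1) i])
      also have "\<dots> \<le> (\<Sum>j<n. norm (?Ac $$ (i, j) * v $ j))" by (rule norm_sum)
      also have "\<dots> = (\<Sum>j<n. A $$ (i, j) * u $ j)"
        using i A A_nonneg unfolding u_def by (intro sum.cong) (auto simp: norm_mult)
      also have "\<dots> \<le> (\<Sum>j<n. B $$ (i, j) * u $ j)"
        using i A_le_B unfolding u_def by (intro sum_mono mult_right_mono) auto
      also have "\<dots> = (B *\<^sub>v u) $ i" using index_mult_mat_vec_sum[OF B u i] by simp
      finally show ?thesis .
    qed
    moreover have "\<forall>i<n. \<forall>j<n. 0 \<le> B $$ (i, j)" using A_nonneg A_le_B by (meson order_trans)
    ultimately have "norm ev \<le> rho B"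
      using i0 False by (intro Collatz_Wielandt_lower_bound[OF B _ u _ i0(1)]) (auto simp: u_def)
    then show ?thesis using ev by simp
  qed
qed

lemma index_Bmat:
  "i < n \<Longrightarrow> j < n \<Longrightarrow>
    Bmat n \<beta> \<beta>min p $$ (i, j) = (if \<beta> i j > 0 then \<beta> i j - (\<beta> i j - \<beta>min) * p i else 0)"
  by (simp add: Bmat_def)

lemma index_Gmat_diag: "i < n \<Longrightarrow> Gmat n \<gamma> \<gamma>min p $$ (i, i) = \<gamma>min + (\<gamma> i - \<gamma>min) * p i"
  by (simp add: Gmat_def mat_diag_def)

lemma index_Ginv_diag_Bmat:
  assumes "i < n" "j < n"
  shows "(Ginv n \<gamma> \<gamma>min p * mat_diag n s * Bmat n \<beta> \<beta>min p) $$ (i, j)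
    = s i / (\<gamma>min + (\<gamma> i - \<gamma>min) * p i) * Bmat n \<beta> \<beta>min p $$ (i, j)"
  using assms by (simp add: Ginv_def mat_diag_mult_left[of _ n n] Bmat_def)

lemma Bmat_nonneg:
  assumes "0 < \<beta>min" "\<forall>i<n. \<forall>j<n. \<beta> i j = 0 \<or> \<beta>min \<le> \<beta> i j" "p i \<le> 1" "i < n" "j < n"
  shows "0 \<le> Bmat n \<beta> \<beta>min p $$ (i, j)"
proof (cases "\<beta> i j > 0")
  case True
  then have "(\<beta> i j - \<beta>min) * p i \<le> \<beta> i j - \<beta>min"
    using assms mult_left_le[of "p i" "\<beta> i j - \<beta>min"] by force
  then show ?thesis using True assms by (simp add: index_Bmat)
qed (use assms in \<open>simp add: index_Bmat\<close>)

lemma transmission_recovery_ratio_antimono: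
  fixes a b bt bmin g gmin :: real
  assumes ab: "0 \<le> a" "a \<le> b" "b \<le> 1" and bt: "0 < bmin" "bmin \<le> bt"
    and g: "0 < gmin" "gmin \<le> g"
  shows "0 \<le> (bt - (bt - bmin) * b) / (gmin + (g - gmin) * b)"
    and "(bt - (bt - bmin) * b) / (gmin + (g - gmin) * b)
      \<le> (bt - (bt - bmin) * a) / (gmin + (g - gmin) * a)"
proof -
  have rec_pos: "0 < gmin + (g - gmin) * a" using g ab by (simp add: add_pos_nonneg)
  have rec_le: "gmin + (g - gmin) * a \<le> gmin + (g - gmin) * b"
    using g ab by (simp add: mult_left_mono)
  have tr_pos: "bmin \<le> bt - (bt - bmin) * b"
    using bt ab mult_left_le[of b "bt - bmin"] by simp
  have tr_le: "bt - (bt - bmin) * b \<le> bt - (bt - bmin) * a"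
    using bt ab by (simp add: mult_left_mono)
  show "0 \<le> (bt - (bt - bmin) * b) / (gmin + (g - gmin) * b)"
    using tr_pos bt rec_pos rec_le by simp
  show "(bt - (bt - bmin) * b) / (gmin + (g - gmin) * b)
      \<le> (bt - (bt - bmin) * a) / (gmin + (g - gmin) * a)"
    using tr_pos tr_le rec_pos rec_le bt by (intro frac_le) auto
qed

lemma Rrep_antimono:
  assumes n: "0 < n" and beta_min_pos: "0 < \<beta>min"
    and beta_cases: "\<forall>i<n. \<forall>j<n. \<beta> i j = 0 \<or> \<beta>min \<le> \<beta> i j"
    and gamma_min_pos: "0 < \<gamma>min" and gamma_ge: "\<forall>i<n. \<gamma>min \<le> \<gamma> i"
    and s_nonneg: "\<forall>i<n. 0 \<le> s i" and p_le: "\<forall>i<n. 0 \<le> p i \<and> p i \<le> p' i \<and> p' i \<le> 1"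
  shows "Rrep n \<beta> \<beta>min \<gamma> \<gamma>min s p' \<le> Rrep n \<beta> \<beta>min \<gamma> \<gamma>min s p"
proof -
  define M where "M q = Ginv n \<gamma> \<gamma>min q * mat_diag n s * Bmat n \<beta> \<beta>min q" for q
  have M: "M q \<in> carrier_mat n n" for q
    unfolding M_def Ginv_def Bmat_def by (intro mult_carrier_mat[of _ n n]) auto
  have "0 \<le> M p' $$ (i, j) \<and> M p' $$ (i, j) \<le> M p $$ (i, j)" if ij: "i < n" "j < n" for i j
  proof (cases "\<beta> i j > 0")
    case False
    then show ?thesis using ij by (simp add: M_def index_Ginv_diag_Bmat index_Bmat)
  next
    case True
    let ?ratio = "\<lambda>a. (\<beta> i j - (\<beta> i j - \<beta>min) * a) / (\<gamma>min + (\<gamma> i - \<gamma>min) * a)"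
    have "M q $$ (i, j) = s i * ?ratio (q i)" for q
      using True ij by (simp add: M_def index_Ginv_diag_Bmat index_Bmat)
    moreover have "0 \<le> ?ratio (p' i)" "?ratio (p' i) \<le> ?ratio (p i)"
    proof -
      have "\<beta>min \<le> \<beta> i j" using beta_cases True ij by force
      moreover have "0 \<le> p i" "p i \<le> p' i" "p' i \<le> 1" using p_le ij by auto
      ultimately show "0 \<le> ?ratio (p' i)" "?ratio (p' i) \<le> ?ratio (p i)"
        using transmission_recovery_ratio_antimono beta_min_pos gamma_min_pos gamma_ge ij by auto
    qed
    ultimately show ?thesis
      using s_nonneg ij mult_left_mono[of "?ratio (p' i)" "?ratio (p i)" "s i"]
        mult_nonneg_nonneg[of "s i" "?ratio (p' i)"] by simp
  qed
  then show ?thesis unfolding Rrep_def M_def[symmetric] by (intro rho_mono[OF M M n]) auto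
qed

lemma bounded_components_on_Icc:
  fixes F :: "real \<Rightarrow> nat \<Rightarrow> real"
  assumes "\<And>i. i < n \<Longrightarrow> continuous_on {a..b} (\<lambda>t. F t i)"
  obtains K where "\<And>t i. t \<in> {a..b} \<Longrightarrow> i < n \<Longrightarrow> \<bar>F t i\<bar> \<le> K"
proof -
  have "bounded (\<Union>i<n. (\<lambda>t. F t i) ` {a..b})"
    using assms by (intro bounded_UN ballI compact_imp_bounded compact_continuous_image) auto
  then obtain K where "\<forall>y\<in>(\<Union>i<n. (\<lambda>t. F t i) ` {a..b}). norm y \<le> K"
    unfolding bounded_iff by blast
  then show thesis using that by fastforce
qed

lemma first_nonpositive_time:
  fixes w :: "real \<Rightarrow> nat \<Rightarrow> real"
  assumes cont: "\<And>j. j < n \<Longrightarrow> continuous_on {0..T} (\<lambda>t. w t j)"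
    and init: "\<And>j. j < n \<Longrightarrow> 0 < w 0 j" and i: "i < n" "0 \<le> T" "w T i \<le> 0"
  obtains \<tau> k where "0 < \<tau>" "\<tau> \<le> T" "k < n" "w \<tau> k = 0" "\<And>j. j < n \<Longrightarrow> 0 \<le> w \<tau> j"
    "\<And>t j. 0 \<le> t \<Longrightarrow> t < \<tau> \<Longrightarrow> j < n \<Longrightarrow> 0 < w t j"
proof -
  define S where "S = {t\<in>{0..T}. \<exists>j<n. w t j \<le> 0}"
  have "S = (\<Union>j<n. (\<lambda>t. w t j) -` {..0} \<inter> {0..T})" by (auto simp: S_def)
  then have "closed S" by (simp only:) (intro closed_UN finite_lessThan ballI closed_vimage_Int cont; simp)
  moreover have "T \<in> S" "bdd_below S" using i by (auto simp: S_def intro: bdd_belowI[of _ 0])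
  ultimately have \<tau>: "Inf S \<in> S" using closed_contains_Inf by blast
  then obtain k where k: "k < n" "w (Inf S) k \<le> 0" and \<tau>_le: "Inf S \<le> T" by (auto simp: S_def)
  have before: "0 < w t j" if "0 \<le> t" "t < Inf S" "j < n" for t j
    using that cInf_lower[OF _ \<open>bdd_below S\<close>, of t] \<tau>_le by (force simp: S_def)
  have \<tau>_pos: "0 < Inf S"
  proof (rule ccontr)
    assume "\<not> 0 < Inf S"
    then have "Inf S = 0" using \<tau> by (auto simp: S_def)
    then show False using k init[OF k(1)] by simp
  qed
  have at: "0 \<le> w (Inf S) j" if j: "j < n" for j
  proof (rule ccontr)
    assume neg: "\<not> 0 \<le> w (Inf S) j"
    moreover have "continuous_on {0..Inf S} (\<lambda>t. w t j)"
      using cont[OF j] by (rule continuous_on_subset) (use \<tau>_le in auto)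
    ultimately obtain t where "0 \<le> t" "t \<le> Inf S" "w t j = 0"
      using IVT2'[of "\<lambda>t. w t j" "Inf S" 0 0] init[OF j] \<tau>_pos by force
    then show False using before[of t j] j neg by (cases "t = Inf S") auto
  qed
  show thesis using that[OF \<tau>_pos \<tau>_le k(1) _ at before] k at[OF k(1)] by force
qed

lemma has_real_derivative_nonpos_at_first_zero:
  fixes f :: "real \<Rightarrow> real"
  assumes "(f has_real_derivative D) (at \<tau> within {0..})" "0 < \<tau>" "f \<tau> = 0"
    and "\<And>t. 0 \<le> t \<Longrightarrow> t < \<tau> \<Longrightarrow> 0 < f t"
  shows "D \<le> 0"
proof (rule ccontr)
  assume "\<not> D \<le> 0"
  then obtain d where d: "0 < d" "\<And>h. 0 < h \<Longrightarrow> \<tau> - h \<in> {0..} \<Longrightarrow> h < d \<Longrightarrow> f (\<tau> - h) < f \<tau>"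
    using has_real_derivative_pos_inc_left[OF assms(1)] by fastforce
  define h where "h = min d \<tau> / 2"
  have h: "0 < h" "h < d" "h < \<tau>" using d(1) assms(2) by (auto simp: h_def min_def)
  then have "f (\<tau> - h) < 0" using d(2)[of h] assms(3) by auto
  then show False using assms(4)[of "\<tau> - h"] h by auto
qed

lemma nonneg_invariant:
  fixes y y' F :: "real \<Rightarrow> nat \<Rightarrow> real"
  assumes deriv: "\<And>t i. 0 \<le> t \<Longrightarrow> i < n \<Longrightarrow>
      ((\<lambda>\<tau>. y \<tau> i) has_real_derivative y' t i) (at t within {0..})"
    and init: "\<And>i. i < n \<Longrightarrow> 0 \<le> y 0 i"
    and F_cont: "\<And>i. i < n \<Longrightarrow> continuous_on {0..} (\<lambda>t. F t i)"
    and quasi_pos: "\<And>t i. 0 \<le> t \<Longrightarrow> i < n \<Longrightarrow> y t i < 0 \<Longrightarrow> (\<forall>j<n. y t i \<le> y t j) \<Longrightarrow>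
      F t i * y t i \<le> y' t i"
    and T: "0 \<le> T" and i: "i < n"
  shows "0 \<le> y T i"
proof (rule ccontr)
  assume neg: "\<not> 0 \<le> y T i"
  have "continuous_on {0..T} (\<lambda>t. F t j)" if "j < n" for j
    using F_cont[OF that] by (rule continuous_on_subset) auto
  then obtain K where K: "\<And>t i. t \<in> {0..T} \<Longrightarrow> i < n \<Longrightarrow> \<bar>F t i\<bar> \<le> K"
    using bounded_components_on_Icc by blast
  define L where "L = K + 1"
  define e where "e = - y T i / (2 * exp (L * T))"
  have e: "0 < e" using neg by (simp add: e_def divide_neg_pos)
  define w where "w t j = y t j + e * exp (L * t)" for t j
  have w_deriv: "((\<lambda>t. w t j) has_real_derivative y' t j + L * (e * exp (L * t))) (at t within {0..})"
    if "0 \<le> t" "j < n" for t j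
    unfolding w_def using deriv[OF that] by (auto intro!: derivative_eq_intros)
  have "continuous_on {0..} (\<lambda>t. w t j)" if "j < n" for j
    using w_deriv that by (intro DERIV_continuous_on) auto
  then have "continuous_on {0..T} (\<lambda>t. w t j)" if "j < n" for j
    using that continuous_on_subset by fastforce
  moreover have "0 < w 0 j" if "j < n" for j using init[OF that] e by (simp add: w_def)
  moreover have "w T i \<le> 0" using neg by (simp add: w_def e_def)
  ultimately obtain \<tau> k where \<tau>: "0 < \<tau>" "\<tau> \<le> T" and k: "k < n" "w \<tau> k = 0"
      and at: "\<And>j. j < n \<Longrightarrow> 0 \<le> w \<tau> j" and before: "\<And>t. 0 \<le> t \<Longrightarrow> t < \<tau> \<Longrightarrow> 0 < w t k"
    using first_nonpositive_time[of n T w i] i T by metis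
  define c where "c = e * exp (L * \<tau>)"
  have c: "0 < c" "y \<tau> k = - c" using e k by (auto simp: c_def w_def)
  have "y \<tau> k \<le> y \<tau> j" if "j < n" for j using at[OF that] c(2) by (simp add: w_def c_def)
  then have "F \<tau> k * y \<tau> k \<le> y' \<tau> k" using quasi_pos[of \<tau> k] \<tau> k c by auto
  moreover have "F \<tau> k * c \<le> K * c" using K[of \<tau> k] \<tau> k c by (intro mult_right_mono) auto
  ultimately have "- K * c \<le> y' \<tau> k" using c(2) by simp
  then have "0 < y' \<tau> k + L * (e * exp (L * \<tau>))" using c by (simp add: L_def c_def algebra_simps)
  moreover have "y' \<tau> k + L * (e * exp (L * \<tau>)) \<le> 0"
    using has_real_derivative_nonpos_at_first_zero[of "\<lambda>t. w t k"] w_deriv[of \<tau> k] \<tau> k before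
    by auto
  ultimately show False by simp
qed

locale epidemic_opinion_model =
  fixes n :: nat
    and \<beta> :: "nat \<Rightarrow> nat \<Rightarrow> real" and \<beta>min :: real
    and \<gamma> :: "nat \<Rightarrow> real" and \<gamma>min :: real
    and abar :: "nat \<Rightarrow> nat \<Rightarrow> real"
    and s x opn :: "real \<Rightarrow> nat \<Rightarrow> real"
  assumes beta_min_pos: "0 < \<beta>min"
    and beta_cases: "\<forall>i<n. \<forall>j<n. \<beta> i j = 0 \<or> \<beta>min \<le> \<beta> i j"
    and abar_nonneg: "\<forall>i<n. \<forall>j<n. 0 \<le> abar i j"
    and init: "\<forall>i<n. 0 \<le> s 0 i \<and> s 0 i \<le> 1 \<and> 0 \<le> x 0 i \<and> x 0 i \<le> 1
                    \<and> 0 \<le> opn 0 i \<and> opn 0 i \<le> 1 \<and> s 0 i + x 0 i \<le> 1"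
    and ds: "\<forall>t\<ge>0. \<forall>i<n. ((\<lambda>\<tau>. s \<tau> i) has_real_derivative
               (- s t i * (\<Sum>j<n. Bmat n \<beta> \<beta>min (opn t) $$ (i, j) * x t j))) (at t within {0..})"
    and dx: "\<forall>t\<ge>0. \<forall>i<n. ((\<lambda>\<tau>. x \<tau> i) has_real_derivative
               (s t i * (\<Sum>j<n. Bmat n \<beta> \<beta>min (opn t) $$ (i, j) * x t j)
                - Gmat n \<gamma> \<gamma>min (opn t) $$ (i, i) * x t i)) (at t within {0..})"
    and dopn: "\<forall>t\<ge>0. \<forall>i<n. ((\<lambda>\<tau>. opn \<tau> i) has_real_derivative
               ((1 - s t i) - ((\<Sum>j<n. abar i j) * opn t i - (\<Sum>j<n. abar i j * opn t j)) - opn t i))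
               (at t within {0..})"
begin

definition infection_force :: "real \<Rightarrow> nat \<Rightarrow> real" where
  "infection_force t i = (\<Sum>j<n. Bmat n \<beta> \<beta>min (opn t) $$ (i, j) * x t j)"

definition opinion_drift :: "real \<Rightarrow> nat \<Rightarrow> real" where
  "opinion_drift t i =
    (1 - s t i) - ((\<Sum>j<n. abar i j) * opn t i - (\<Sum>j<n. abar i j * opn t j)) - opn t i"

lemma continuous_on_components:
  assumes "i < n"
  shows "continuous_on {0..} (\<lambda>t. s t i)" "continuous_on {0..} (\<lambda>t. x t i)"
    "continuous_on {0..} (\<lambda>t. opn t i)"
  using ds dx dopn assms by (auto intro!: DERIV_continuous_on)

lemma continuous_on_Bmat_entry:
  assumes "i < n" "j < n"
  shows "continuous_on {0..} (\<lambda>t. Bmat n \<beta> \<beta>min (opn t) $$ (i, j))"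
  using assms continuous_on_components(3)[OF assms(1)]
  by (cases "\<beta> i j > 0") (auto simp: index_Bmat intro!: continuous_intros)

lemma continuous_on_infection_force:
  assumes "i < n"
  shows "continuous_on {0..} (\<lambda>t. infection_force t i)"
  unfolding infection_force_def using assms
  by (auto intro!: continuous_intros continuous_on_Bmat_entry continuous_on_components)

lemma s_nonneg:
  assumes "0 \<le> t" "i < n"
  shows "0 \<le> s t i"
proof (rule nonneg_invariant[of n s "\<lambda>t i. - s t i * infection_force t i"
      "\<lambda>t i. - infection_force t i"])
  show "((\<lambda>\<tau>. s \<tau> i) has_real_derivative - s t i * infection_force t i) (at t within {0..})"
    if "0 \<le> t" "i < n" for t i
    using ds that unfolding infection_force_def by simp
qed (use init assms continuous_on_infection_force in \<open>auto intro!: continuous_intros\<close>)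

lemma opn_le_1:
  assumes "0 \<le> t" "i < n"
  shows "opn t i \<le> 1"
proof -
  have "0 \<le> 1 - opn t i"
  proof (rule nonneg_invariant[of n "\<lambda>t i. 1 - opn t i" "\<lambda>t i. - opinion_drift t i" "\<lambda>_ _. 0"])
    show "((\<lambda>\<tau>. 1 - opn \<tau> i) has_real_derivative - opinion_drift t i) (at t within {0..})"
      if "0 \<le> t" "i < n" for t i
      using dopn that unfolding opinion_drift_def by (auto intro!: derivative_eq_intros)
    show "0 * (1 - opn t i) \<le> - opinion_drift t i"
      if "0 \<le> t" "i < n" "1 - opn t i < 0" "\<forall>j<n. 1 - opn t i \<le> 1 - opn t j" for t i
    proof -
      have "(\<Sum>j<n. abar i j * opn t j) \<le> (\<Sum>j<n. abar i j) * opn t i"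
        unfolding sum_distrib_right using that abar_nonneg by (auto intro!: sum_mono mult_left_mono)
      then show ?thesis using that s_nonneg[of t i] by (simp add: opinion_drift_def)
    qed
  qed (use init assms in auto)
  then show ?thesis by simp
qed

lemma x_nonneg:
  assumes "0 \<le> t" "i < n"
  shows "0 \<le> x t i"
proof (rule nonneg_invariant[of n x
      "\<lambda>t i. s t i * infection_force t i - Gmat n \<gamma> \<gamma>min (opn t) $$ (i, i) * x t i"
      "\<lambda>t i. s t i * (\<Sum>j<n. Bmat n \<beta> \<beta>min (opn t) $$ (i, j)) - (\<gamma>min + (\<gamma> i - \<gamma>min) * opn t i)"])
  show "((\<lambda>\<tau>. x \<tau> i) has_real_derivative
      s t i * infection_force t i - Gmat n \<gamma> \<gamma>min (opn t) $$ (i, i) * x t i) (at t within {0..})"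
    if "0 \<le> t" "i < n" for t i
    using dx that unfolding infection_force_def by simp
  show "continuous_on {0..} (\<lambda>t. s t i * (\<Sum>j<n. Bmat n \<beta> \<beta>min (opn t) $$ (i, j))
      - (\<gamma>min + (\<gamma> i - \<gamma>min) * opn t i))" if "i < n" for i
    using that by (auto intro!: continuous_intros continuous_on_Bmat_entry continuous_on_components)
  show "(s t i * (\<Sum>j<n. Bmat n \<beta> \<beta>min (opn t) $$ (i, j)) - (\<gamma>min + (\<gamma> i - \<gamma>min) * opn t i)) * x t i
      \<le> s t i * infection_force t i - Gmat n \<gamma> \<gamma>min (opn t) $$ (i, i) * x t i"
    if "0 \<le> t" "i < n" "x t i < 0" "\<forall>j<n. x t i \<le> x t j" for t i
  proof -
    have "(\<Sum>j<n. Bmat n \<beta> \<beta>min (opn t) $$ (i, j)) * x t i \<le> infection_force t i"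
      unfolding infection_force_def sum_distrib_right using that opn_le_1
      by (auto intro!: sum_mono mult_left_mono Bmat_nonneg beta_min_pos beta_cases)
    then have "s t i * ((\<Sum>j<n. Bmat n \<beta> \<beta>min (opn t) $$ (i, j)) * x t i)
        \<le> s t i * infection_force t i"
      using s_nonneg that by (intro mult_left_mono) auto
    then show ?thesis using that by (simp add: index_Gmat_diag algebra_simps)
  qed
qed (use init assms in auto)

lemma infection_force_nonneg:
  assumes "0 \<le> t" "i < n"
  shows "0 \<le> infection_force t i"
  unfolding infection_force_def using assms opn_le_1 x_nonneg
  by (auto intro!: sum_nonneg mult_nonneg_nonneg Bmat_nonneg beta_min_pos beta_cases)

lemma s_le_1:
  assumes "0 \<le> t" "i < n"
  shows "s t i \<le> 1"
proof -
  have "0 \<le> 1 - s t i"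
  proof (rule nonneg_invariant[of n "\<lambda>t i. 1 - s t i" "\<lambda>t i. s t i * infection_force t i"
        "\<lambda>_ _. 0"])
    show "((\<lambda>\<tau>. 1 - s \<tau> i) has_real_derivative s t i * infection_force t i) (at t within {0..})"
      if "0 \<le> t" "i < n" for t i
      using ds that unfolding infection_force_def by (auto intro!: derivative_eq_intros)
  qed (use init assms s_nonneg infection_force_nonneg in auto)
  then show ?thesis by simp
qed

lemma opn_nonneg:
  assumes "0 \<le> t" "i < n"
  shows "0 \<le> opn t i"
proof (rule nonneg_invariant[of n opn opinion_drift "\<lambda>_ _. 0"])
  show "((\<lambda>\<tau>. opn \<tau> i) has_real_derivative opinion_drift t i) (at t within {0..})"
    if "0 \<le> t" "i < n" for t i
    using dopn that unfolding opinion_drift_def by simp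
  show "0 * opn t i \<le> opinion_drift t i"
    if "0 \<le> t" "i < n" "opn t i < 0" "\<forall>j<n. opn t i \<le> opn t j" for t i
  proof -
    have "(\<Sum>j<n. abar i j) * opn t i \<le> (\<Sum>j<n. abar i j * opn t j)"
      unfolding sum_distrib_right using that abar_nonneg by (auto intro!: sum_mono mult_left_mono)
    then show ?thesis using that s_le_1[of t i] by (simp add: opinion_drift_def)
  qed
qed (use init assms in auto)

end

theorem corollary1:
  fixes n :: nat
    and \<beta> :: "nat \<Rightarrow> nat \<Rightarrow> real" and \<beta>min :: real
    and \<gamma> :: "nat \<Rightarrow> real" and \<gamma>min :: real
    and abar :: "nat \<Rightarrow> nat \<Rightarrow> real"
    and s x opn :: "real \<Rightarrow> nat \<Rightarrow> real"
  assumes n_pos: "0 < n"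
    and beta_min_pos: "0 < \<beta>min"
    and beta_cases: "\<forall>i<n. \<forall>j<n. \<beta> i j = 0 \<or> \<beta>min \<le> \<beta> i j"
    and gamma_min_pos: "0 < \<gamma>min"
    and gamma_ge: "\<forall>i<n. \<gamma>min \<le> \<gamma> i"
    and abar_nonneg: "\<forall>i<n. \<forall>j<n. 0 \<le> abar i j"
    and G_sc: "strongly_connected n \<beta>"
    and Gbar_sc: "strongly_connected n abar"
    and init: "\<forall>i<n. 0 \<le> s 0 i \<and> s 0 i \<le> 1 \<and> 0 \<le> x 0 i \<and> x 0 i \<le> 1
                    \<and> 0 \<le> opn 0 i \<and> opn 0 i \<le> 1 \<and> s 0 i + x 0 i \<le> 1"
    and ds: "\<forall>t\<ge>0. \<forall>i<n. ((\<lambda>\<tau>. s \<tau> i) has_real_derivative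
               (- s t i * (\<Sum>j<n. Bmat n \<beta> \<beta>min (opn t) $$ (i, j) * x t j))) (at t within {0..})"
    and dx: "\<forall>t\<ge>0. \<forall>i<n. ((\<lambda>\<tau>. x \<tau> i) has_real_derivative
               (s t i * (\<Sum>j<n. Bmat n \<beta> \<beta>min (opn t) $$ (i, j) * x t j)
                - Gmat n \<gamma> \<gamma>min (opn t) $$ (i, i) * x t i)) (at t within {0..})"
    and dopn: "\<forall>t\<ge>0. \<forall>i<n. ((\<lambda>\<tau>. opn \<tau> i) has_real_derivative
               ((1 - s t i) - ((\<Sum>j<n. abar i j) * opn t i - (\<Sum>j<n. abar i j * opn t j)) - opn t i))
               (at t within {0..})"
    and t_nonneg: "0 \<le> t"
  shows "Rrep n \<beta> \<beta>min \<gamma> \<gamma>min (s t) (\<lambda>_. 1) \<le> Rrep n \<beta> \<beta>min \<gamma> \<gamma>min (s t) (opn t)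
       \<and> Rrep n \<beta> \<beta>min \<gamma> \<gamma>min (s t) (opn t) \<le> Rrep n \<beta> \<beta>min \<gamma> \<gamma>min (s t) (\<lambda>_. 0)"
proof -
  interpret epidemic_opinion_model n \<beta> \<beta>min \<gamma> \<gamma>min abar s x opn
    using beta_min_pos beta_cases abar_nonneg init ds dx dopn by unfold_locales
  have "\<forall>i<n. 0 \<le> s t i" "\<forall>i<n. 0 \<le> opn t i \<and> opn t i \<le> 1"
    using s_nonneg opn_nonneg opn_le_1 t_nonneg by auto
  then show ?thesis
    using Rrep_antimono[OF n_pos beta_min_pos beta_cases gamma_min_pos gamma_ge] by auto
qed

end
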